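(* Let $k$ be a field, $D\ge0$ an integer and $e_1,e_2,e_3$ nonnegative integers with $e_i\le D$ for all $i$ and $e_i+e_j\le D$ for all $i\ne j$. Let $R_1,R_2,R_3\in k[u,v]$ be nonzero homogeneous polynomials of degrees $e_1,e_2,e_3$. Then the $k$-vector space $$\{(R'_1,R'_2,R'_3)\in k[u,v]_{D-e_1}\times k[u,v]_{D-e_2}\times k[u,v]_{D-e_3}:\ R_1R'_1+R_2R'_2+R_3R'_3=0\}$$ has dimension $2+2D-(e_1+e_2+e_3)+\deg\gcd(R_1,R_2,R_3)$.
   Context: $k[u,v]_m$ denotes the space of homogeneous polynomials of degree $m$ in two variables (including $0$). *)

theory Defs
  imports "HOL-Computational_Algebra.Computational_Algebra" "HOL-Library.Product_Plus"
begin

text \<open>Bivariate polynomials k[u,v] are represented as 'a poly poly: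
  coeff (coeff p j) i is the coefficient of u^i v^j.\<close>

definition bihom :: "nat \<Rightarrow> 'a::zero poly poly \<Rightarrow> bool" where
  "bihom m p \<longleftrightarrow> (\<forall>i j. coeff (coeff p j) i \<noteq> 0 \<longrightarrow> i + j = m)"

definition bi_total_degree :: "'a::zero poly poly \<Rightarrow> nat" where
  "bi_total_degree p = Max {i + j | i j. coeff (coeff p j) i \<noteq> 0}"

definition triple_scale ::
  "'a::comm_semiring_1 \<Rightarrow> 'a poly poly \<times> 'a poly poly \<times> 'a poly poly
      \<Rightarrow> 'a poly poly \<times> 'a poly poly \<times> 'a poly poly" where
  "triple_scale c x = (case x of (a, b, d) \<Rightarrow>
      (smult [:c:] a, smult [:c:] b, smult [:c:] d))"

end

theory Submission
  imports Defs "HOL-Analysis.Product_Vector"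
begin

text \<open>
  Write \<open>R\<^sub>i = G S\<^sub>i\<close> with \<open>G = gcd R1 R2 R3\<close> of degree \<open>g\<close>.  Cancelling \<open>G\<close> does not change
  the syzygies, and for the \<open>S\<^sub>i\<close> (now without common factor) the multiplication map
  \<open>(P1, P2, P3) \<mapsto> S1 P1 + S2 P2 + S3 P3\<close> from
  \<open>k[u,v]\<^sub>D\<^sub>-\<^sub>e\<^sub>1 \<times> k[u,v]\<^sub>D\<^sub>-\<^sub>e\<^sub>2 \<times> k[u,v]\<^sub>D\<^sub>-\<^sub>e\<^sub>3\<close> onto \<open>k[u,v]\<^sub>D\<^sub>-\<^sub>g\<close> is surjective.  Rank--nullity then
  gives the dimension \<open>\<Sum>\<^sub>i (D - e\<^sub>i + 1) - (D - g + 1) = 2 + 2D - \<Sum>\<^sub>i e\<^sub>i + g\<close> of its kernel.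

  Surjectivity rests on the two-form case: for coprime forms \<open>T1, T2\<close> of degrees \<open>t1, t2\<close>
  with \<open>t1 + t2 \<le> m + 1\<close>, every form of degree \<open>m\<close> is \<open>T1 A + T2 B\<close>.  This is again a
  dimension count, since the syzygies of \<open>T1, T2\<close> are the Koszul syzygies \<open>(T2 C, - T1 C)\<close>.
  For three forms one applies it to \<open>gcd S1 S2\<close> and \<open>S3\<close>, and then to \<open>S1, S2\<close> divided
  by their gcd.
\<close>

section \<open>Linear algebra in finitely spanned subspaces\<close>

text \<open>A set is finitely spanned if it lies in the span of a finite set.  The rank--nullity
  statements of the library assume a finite-dimensional ambient space, which we do not have.\<close>
definition finitely_spanned :: "('a::comm_ring_1 \<Rightarrow> 'b \<Rightarrow> 'b::ab_group_add) \<Rightarrow> 'b set \<Rightarrow> bool" where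
  "finitely_spanned s V \<longleftrightarrow> (\<exists>B. finite B \<and> V \<subseteq> module.span s B)"

context vector_space
begin

lemma finite_independent_subset:
  fixes B :: "'b set"
  assumes "finitely_spanned scale V" "independent B" "B \<subseteq> V"
  shows "finite B"
  using assms independent_span_bound unfolding finitely_spanned_def by blast

lemma subspace_eq_of_dim_eq:
  assumes U: "subspace U" and UV: "U \<subseteq> V" and fin: "finitely_spanned scale V"
    and eq: "dim U = dim V"
  shows "U = V"
proof
  show "V \<subseteq> U"
  proof
    fix v assume v: "v \<in> V"
    obtain BU where BU: "BU \<subseteq> U" "independent BU" "U \<subseteq> span BU" "card BU = dim U"
      using basis_exists[of U] by blast
    obtain BV where BV: "BV \<subseteq> V" "independent BV" "V \<subseteq> span BV" "card BV = dim V"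
      using basis_exists[of V] by blast
    have finBV: "finite BV" using finite_independent_subset[OF fin BV(2,1)] .
    show "v \<in> U"
    proof (rule ccontr)
      assume "v \<notin> U"
      then have v_new: "v \<notin> span BU" using span_minimal[OF BU(1) U] by auto
      then have "independent (insert v BU)" using independent_insertI BU(2) by blast
      moreover have "insert v BU \<subseteq> span BV" using BU(1) UV v BV(3) by auto
      ultimately have "finite (insert v BU) \<and> card (insert v BU) \<le> card BV"
        by (rule independent_span_bound[OF finBV])
      moreover have "v \<notin> BU" using v_new span_base by auto
      ultimately show False using BU(4) BV(4) eq by auto
    qed
  qed
qed (use UV in simp)

lemma dim_zero_space [simp]: "dim {0} = 0"
  by (metis dim_span span_empty dim_eq_card_independent independent_empty card.empty)

lemma span_Int_span_of_independent:
  assumes indep: "independent (A \<union> B)" and disj: "A \<inter> B = {}"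
    and fin: "finite A" "finite B"
    and x: "x \<in> span A" "x \<in> span B"
  shows "x = 0"
proof -
  obtain u where u: "x = (\<Sum>v\<in>A. u v *s v)" using x(1) span_finite[OF fin(1)] by auto
  obtain w where w: "x = (\<Sum>v\<in>B. w v *s v)" using x(2) span_finite[OF fin(2)] by auto
  define z where "z v = (if v \<in> A then u v else - w v)" for v
  have "(\<Sum>v\<in>A \<union> B. z v *s v) = (\<Sum>v\<in>A. z v *s v) + (\<Sum>v\<in>B. z v *s v)"
    by (rule sum.union_disjoint[OF fin disj])
  also have "(\<Sum>v\<in>B. z v *s v) = (\<Sum>v\<in>B. (- w v) *s v)"
    using disj by (intro sum.cong) (auto simp: z_def)
  also have "(\<Sum>v\<in>A. z v *s v) = (\<Sum>v\<in>A. u v *s v)"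
    by (simp add: z_def)
  finally have "(\<Sum>v\<in>A \<union> B. z v *s v) = 0"
    using u w by (simp add: sum_negf)
  then have "\<forall>v\<in>A. u v = 0"
    using indep fin unfolding independent_explicit_module z_def by force
  then show "x = 0" using u by simp
qed

end

context vector_space_pair
begin

lemma image_subset_span_complement:
  assumes lf: "Vector_Spaces.linear s1 s2 f" and W: "W \<subseteq> vs1.span (Bk \<union> C)"
    and vanish: "\<And>b. b \<in> Bk \<Longrightarrow> f b = 0"
  shows "f ` W \<subseteq> vs2.span (f ` C)"
proof
  fix y assume "y \<in> f ` W"
  then obtain x where x: "x \<in> W" "y = f x" by auto
  then obtain a b where ab: "x = a + b" "a \<in> vs1.span Bk" "b \<in> vs1.span C"
    using W unfolding vs1.span_Un by auto
  have "f a = 0" using linear_eq_0_on_span[OF lf vanish ab(2)] by simp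
  then have "y = f b" using x ab linear_add[OF lf] by simp
  then show "y \<in> vs2.span (f ` C)" using ab(3) linear_span_image[OF lf] by auto
qed

text \<open>Rank--nullity for a linear map restricted to a finitely spanned subspace \<open>W\<close>:
  a basis \<open>Bk\<close> of the kernel extends to a basis \<open>Bk \<union> C\<close> of \<open>W\<close>, and \<open>f\<close> maps
  \<open>C\<close> injectively onto a basis of the image.\<close>
lemma rank_nullity:
  assumes lf: "Vector_Spaces.linear s1 s2 f" and W: "vs1.subspace W"
    and fin: "finitely_spanned s1 W"
  shows "vs1.dim W = vs1.dim {x\<in>W. f x = 0} + vs2.dim (f ` W)"
proof -
  define K where "K = {x\<in>W. f x = 0}"
  have K: "vs1.subspace K"
    using vs1.subspace_inter[OF W linear_subspace_kernel[OF lf]] unfolding K_def by (simp add: Int_def)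
  obtain Bk where Bk: "Bk \<subseteq> K" "vs1.independent Bk" "K \<subseteq> vs1.span Bk" "card Bk = vs1.dim K"
    using vs1.basis_exists[of K] by blast
  have "Bk \<subseteq> W" using Bk(1) K_def by auto
  then obtain BW where BW: "Bk \<subseteq> BW" "BW \<subseteq> W" "vs1.independent BW" "W \<subseteq> vs1.span BW"
    using vs1.maximal_independent_subset_extend[of Bk W] Bk(2) by blast
  have finBW: "finite BW" using vs1.finite_independent_subset[OF fin BW(3,2)] .
  define C where "C = BW - Bk"
  have BW_split: "BW = Bk \<union> C" "Bk \<inter> C = {}" using BW(1) C_def by auto
  have finC: "finite C" and finBk: "finite Bk" using finBW BW_split by auto
  have ker_C: "x = 0" if x: "x \<in> vs1.span C" "f x = 0" for x
  proof -
    have "x \<in> vs1.span BW" using x(1) vs1.span_mono[of C BW] BW_split by auto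
    then have "x \<in> K" using vs1.span_minimal[OF BW(2) W] x(2) K_def by auto
    then show "x = 0"
      using vs1.span_Int_span_of_independent[OF _ BW_split(2) finBk finC] BW(3) BW_split Bk(3) x(1)
      by auto
  qed
  have injC: "inj_on f (vs1.span C)"
    using linear_inj_on_iff_eq_0[OF lf vs1.subspace_span] ker_C by blast
  have "vs2.independent (f ` C)"
    using linear_independent_injective_image[OF lf _ injC] vs1.independent_mono[OF BW(3)] C_def
    by auto
  moreover have "card (f ` C) = card C"
    using card_image inj_on_subset[OF injC vs1.span_superset] by blast
  moreover have "vs2.span (f ` W) = vs2.span (f ` C)"
    unfolding vs2.span_eq
  proof
    show "f ` C \<subseteq> vs2.span (f ` W)" using C_def BW(2) vs2.span_superset by blast
    show "f ` W \<subseteq> vs2.span (f ` C)"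
      by (rule image_subset_span_complement[OF lf, of W Bk]) (use BW(4) BW_split Bk(1) K_def in auto)
  qed
  ultimately have "vs2.dim (f ` W) = card C"
    using vs2.span_eq_dim vs2.dim_eq_card_independent by metis
  moreover have "vs1.dim W = card Bk + card C"
    using vs1.basis_card_eq_dim[OF BW(2,4,3)] BW_split finBW by (simp add: card_Un_disjoint)
  ultimately show ?thesis using Bk(4) K_def by simp
qed

corollary dim_image_inj:
  assumes lf: "Vector_Spaces.linear s1 s2 f" and W: "vs1.subspace W"
    and fin: "finitely_spanned s1 W" and inj: "inj_on f W"
  shows "vs2.dim (f ` W) = vs1.dim W"
proof -
  have "{x\<in>W. f x = 0} = {0}"
    using inj vs1.subspace_0[OF W] linear_0[OF lf] by (auto dest: inj_onD[of f W _ 0])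
  then show ?thesis using rank_nullity[OF lf W fin] by simp
qed

end

lemma (in vector_space_prod) finitely_spanned_Times:
  assumes "finitely_spanned s1 A" "finitely_spanned s2 B"
  shows "finitely_spanned scale (A \<times> B)"
proof -
  obtain FA FB where "finite FA" "A \<subseteq> vs1.span FA" "finite FB" "B \<subseteq> vs2.span FB"
    using assms unfolding finitely_spanned_def by blast
  moreover have "p.span (FA \<times> {0} \<union> {0} \<times> FB) = vs1.span FA \<times> vs2.span FB"
    unfolding p.span_Un span_Times_sing1 span_Times_sing2 by force
  ultimately show ?thesis unfolding finitely_spanned_def
    by (intro exI[of _ "FA \<times> {0} \<union> {0} \<times> FB"]) auto
qed

lemma (in vector_space_prod) independent_Times_axes:
  assumes BA: "vs1.independent BA" and BB: "vs2.independent BB"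
  shows "p.independent (BA \<times> {0} \<union> {0} \<times> BB)"
proof -
  have nonzero: "0 \<notin> BA" "0 \<notin> BB" using BA BB vs1.dependent_zero vs2.dependent_zero by blast+
  show ?thesis
    unfolding p.dependent_def
  proof safe
    fix a assume a: "a \<in> BA" "(a, 0) \<in> p.span (BA \<times> {0} \<union> {0} \<times> BB - {(a, 0)})"
    have "BA \<times> {0} \<union> {0} \<times> BB - {(a, 0)} = (BA - {a}) \<times> {0} \<union> {0} \<times> BB"
      using nonzero by auto
    then show False
      using a BA vs1.dependent_def by (auto simp: p.span_Un span_Times_sing1 span_Times_sing2)
  next
    fix b assume b: "b \<in> BB" "(0, b) \<in> p.span (BA \<times> {0} \<union> {0} \<times> BB - {(0, b)})"
    have "BA \<times> {0} \<union> {0} \<times> BB - {(0, b)} = BA \<times> {0} \<union> {0} \<times> (BB - {b})"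
      using nonzero by auto
    then show False
      using b BB vs2.dependent_def by (auto simp: p.span_Un span_Times_sing1 span_Times_sing2)
  qed
qed

text \<open>In a product of vector spaces the dimension of \<open>A \<times> B\<close> is the sum of the
  dimensions of its finitely spanned factors, since the bases of the factors placed
  on the two axes form a basis of \<open>A \<times> B\<close>.\<close>
lemma (in vector_space_prod) dim_Times_finite:
  assumes A: "vs1.subspace A" and B: "vs2.subspace B"
    and finA: "finitely_spanned s1 A" and finB: "finitely_spanned s2 B"
  shows "p.dim (A \<times> B) = vs1.dim A + vs2.dim B"
proof -
  obtain BA where BA: "BA \<subseteq> A" "vs1.independent BA" "A \<subseteq> vs1.span BA" "card BA = vs1.dim A"
    using vs1.basis_exists by blast
  obtain BB where BB: "BB \<subseteq> B" "vs2.independent BB" "B \<subseteq> vs2.span BB" "card BB = vs2.dim B"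
    using vs2.basis_exists by blast
  have fin: "finite BA" "finite BB"
    using vs1.finite_independent_subset[OF finA BA(2,1)]
      vs2.finite_independent_subset[OF finB BB(2,1)] by auto
  define E where "E = BA \<times> {0} \<union> {0} \<times> BB"
  have "E \<subseteq> A \<times> B"
    using BA(1) BB(1) vs1.subspace_0[OF A] vs2.subspace_0[OF B] by (auto simp: E_def)
  moreover have "A \<times> B \<subseteq> p.span E"
    using BA(3) BB(3) unfolding E_def p.span_Un span_Times_sing1 span_Times_sing2 by force
  moreover have "card E = card BA + card BB"
  proof -
    have "0 \<notin> BA" "0 \<notin> BB" using BA(2) BB(2) vs1.dependent_zero vs2.dependent_zero by blast+
    then have "BA \<times> {0} \<inter> {0} \<times> BB = {}" by auto
    then show ?thesis unfolding E_def using fin by (simp add: card_Un_disjoint card_cartesian_product)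
  qed
  ultimately show ?thesis
    using p.basis_card_eq_dim independent_Times_axes[OF BA(2) BB(2)] BA(4) BB(4)
    unfolding E_def by metis
qed

section \<open>Homogeneity through a grading map\<close>

definition const_lift :: "'a::comm_ring_1 poly \<Rightarrow> 'a poly poly" where
  "const_lift p = map_poly (\<lambda>c. [:c:]) p"

lemma const_lift_pCons: "const_lift (pCons a p) = pCons [:a:] (const_lift p)"
  unfolding const_lift_def by (simp add: map_poly_pCons)

lemma const_lift_0 [simp]: "const_lift 0 = 0"
  by (simp add: const_lift_def)

lemma const_lift_add: "const_lift (p + q) = const_lift p + const_lift q"
  unfolding const_lift_def by (intro poly_eqI) (simp add: coeff_map_poly)

lemma const_lift_smult: "const_lift (smult a q) = smult [:a:] (const_lift q)"
  unfolding const_lift_def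
  by (intro poly_eqI) (simp add: coeff_map_poly mult_to_poly mult.commute)

lemma const_lift_mult: "const_lift (p * q) = const_lift p * const_lift q"
  by (induct p) (simp_all add: const_lift_add const_lift_smult const_lift_pCons)

lemma coeff_const_lift: "coeff (coeff (const_lift a) m) j = (if j = 0 then coeff a m else 0)"
  by (simp add: const_lift_def coeff_map_poly coeff_pCons split: nat.splits)

text \<open>\<open>graded F\<close> is \<open>F(t, t s)\<close> as a polynomial in \<open>t\<close> with coefficients in \<open>k[s]\<close>: its
  coefficient of \<open>t\<^sup>m\<close> records the homogeneous component of degree \<open>m\<close> of \<open>F\<close>
  (see \<open>coeff_graded\<close>).\<close>
definition graded :: "'a::comm_ring_1 poly poly \<Rightarrow> 'a poly poly" where
  "graded F = poly (map_poly const_lift F) [:0, [:0, 1:]:]"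

lemma graded_0 [simp]: "graded 0 = 0"
  by (simp add: graded_def)

lemma graded_pCons: "graded (pCons a F) = const_lift a + [:0, [:0, 1:]:] * graded F"
  unfolding graded_def by (simp add: map_poly_pCons)

lemma graded_add: "graded (A + B) = graded A + graded B"
proof -
  have "map_poly const_lift (A + B) = map_poly const_lift A + map_poly const_lift B"
    by (intro poly_eqI) (simp add: coeff_map_poly const_lift_add)
  then show ?thesis unfolding graded_def by simp
qed

lemma graded_smult: "graded (smult a F) = const_lift a * graded F"
  by (induct F) (auto simp: graded_pCons const_lift_mult algebra_simps)

lemma graded_mult: "graded (A * B) = graded A * graded B"
  by (induct A) (auto simp: graded_pCons graded_add graded_smult algebra_simps)

lemma coeff_graded:
  "coeff (coeff (graded F) m) j = (if j \<le> m then coeff (coeff F j) (m - j) else 0)"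
proof (induct F arbitrary: m j)
  case (pCons a F)
  show ?case
    by (cases m; cases j) (auto simp: graded_pCons coeff_const_lift pCons.hyps coeff_pCons)
qed simp

lemma graded_eq_0_iff: "graded F = 0 \<longleftrightarrow> F = 0"
proof
  assume "graded F = 0"
  then have "coeff (coeff F j) i = 0" for i j
    using coeff_graded[of F "i + j" j] by simp
  then show "F = 0" by (intro poly_eqI) (simp add: poly_eq_iff)
qed simp

lemma bihom_iff_graded: "bihom n F \<longleftrightarrow> graded F = monom (coeff (graded F) n) n"
proof
  assume hom: "bihom n F"
  have "coeff (graded F) m = 0" if "m \<noteq> n" for m
    using hom that unfolding bihom_def
    by (intro poly_eqI) (simp add: coeff_graded; metis add.commute le_add_diff_inverse)
  then show "graded F = monom (coeff (graded F) n) n"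
    by (intro poly_eqI) simp
next
  assume mono: "graded F = monom (coeff (graded F) n) n"
  show "bihom n F" unfolding bihom_def
  proof (intro allI impI)
    fix i j assume "coeff (coeff F j) i \<noteq> 0"
    then have "coeff (coeff (graded F) (i + j)) j \<noteq> 0" by (simp add: coeff_graded)
    then show "i + j = n" using mono by (metis coeff_monom coeff_0)
  qed
qed

lemma monomial_factor:
  fixes p q :: "'b::idom poly"
  assumes pq: "p * q = monom c n" and p: "p \<noteq> 0" and q: "q \<noteq> 0"
  shows "p = monom (lead_coeff p) (degree p)"
proof -
  have c: "c \<noteq> 0" using pq p q by (metis monom_eq_0_iff mult_eq_0_iff)
  have "order 0 p + order 0 q = n"
    using order_mult[of p q 0] pq p q c by simp
  moreover have "degree p + degree q = n"
    using degree_mult_eq[OF p q] pq c by (simp add: degree_monom_eq)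
  moreover have "order 0 p \<le> degree p" "order 0 q \<le> degree q" using order_degree p q by auto
  ultimately have "order 0 p = degree p" by linarith
  then have "monom 1 (degree p) dvd p" using monom_1_dvd_iff[OF p] by simp
  then obtain r where r: "p = monom 1 (degree p) * r" by (auto elim: dvdE)
  with p have "r \<noteq> 0" by auto
  with r have "degree r = 0"
    by (metis add_cancel_right_right degree_monom_eq degree_mult_eq monom_eq_0_iff one_neq_zero)
  then obtain a where "r = [:a:]" by (metis degree_eq_zeroE)
  then have "p = monom a (degree p)" using r by (simp add: mult.commute smult_monom)
  then show ?thesis by (metis coeff_monom)
qed

lemma bihom_0 [simp]: "bihom n 0"
  by (simp add: bihom_def)

lemma bihom_add: "bihom n A \<Longrightarrow> bihom n B \<Longrightarrow> bihom n (A + B)"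
  unfolding bihom_def by (metis add.right_neutral coeff_add)

lemma bihom_uminus: "bihom n A \<Longrightarrow> bihom n (- A)"
  unfolding bihom_def by auto

lemma bihom_smult_const: "bihom n A \<Longrightarrow> bihom n (smult [:c:] (A::'a::idom poly poly))"
  unfolding bihom_def by (simp add: coeff_smult)

lemma bihom_mult:
  fixes A B :: "'a::comm_ring_1 poly poly"
  assumes "bihom a A" "bihom b B" shows "bihom (a + b) (A * B)"
proof -
  have "graded (A * B) = monom (coeff (graded A) a * coeff (graded B) b) (a + b)"
    using assms unfolding bihom_iff_graded graded_mult by (metis mult_monom)
  then show ?thesis unfolding bihom_iff_graded by simp
qed

lemma bi_total_degree_eq:
  assumes "F \<noteq> 0" "bihom n F" shows "bi_total_degree F = n"
proof -
  obtain j where "coeff F j \<noteq> 0" using assms(1) by (metis leading_coeff_0_iff)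
  then obtain i where "coeff (coeff F j) i \<noteq> 0" by (metis leading_coeff_0_iff)
  then have "{i + j | i j. coeff (coeff F j) i \<noteq> 0} = {n}"
    using assms(2) unfolding bihom_def by blast
  then show ?thesis unfolding bi_total_degree_def by simp
qed

lemma bihom_factor:
  fixes A B :: "'a::idom poly poly"
  assumes nz: "A * B \<noteq> 0" and hom: "bihom n (A * B)"
  shows "bihom (bi_total_degree A) A" "bihom (bi_total_degree B) B"
    "bi_total_degree A + bi_total_degree B = n"
proof -
  define c where "c = coeff (graded (A * B)) n"
  have A: "graded A \<noteq> 0" and B: "graded B \<noteq> 0" using nz graded_eq_0_iff by auto
  have AB: "graded A * graded B = monom c n"
    using hom unfolding bihom_iff_graded graded_mult c_def by simp
  have "graded A = monom (coeff (graded A) (degree (graded A))) (degree (graded A))"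
    using monomial_factor[OF AB A B] .
  then have homA: "bihom (degree (graded A)) A" unfolding bihom_iff_graded .
  have "graded B = monom (coeff (graded B) (degree (graded B))) (degree (graded B))"
    using monomial_factor[of "graded B" "graded A"] AB A B by (simp add: mult.commute)
  then have homB: "bihom (degree (graded B)) B" unfolding bihom_iff_graded .
  have "c \<noteq> 0" using AB A B by (metis monom_eq_0_iff no_zero_divisors)
  then have "degree (graded A) + degree (graded B) = n"
    using AB degree_mult_eq[OF A B] by (simp add: degree_monom_eq)
  moreover have "bi_total_degree A = degree (graded A)" "bi_total_degree B = degree (graded B)"
    using bi_total_degree_eq homA homB nz by auto
  ultimately show "bihom (bi_total_degree A) A" "bihom (bi_total_degree B) B"
    "bi_total_degree A + bi_total_degree B = n" using homA homB by simp_all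
qed

lemma bihom_cofactor:
  fixes T C :: "'a::idom poly poly"
  assumes T: "T \<noteq> 0" "bihom t T" and TC: "bihom d (T * C)"
  shows "bihom (d - t) C" and "C \<noteq> 0 \<Longrightarrow> t \<le> d"
proof -
  have "bihom (d - t) C \<and> (C \<noteq> 0 \<longrightarrow> t \<le> d)"
  proof (cases "C = 0")
    case False
    then have "T * C \<noteq> 0" using T by simp
    from bihom_factor[OF this TC] bi_total_degree_eq[OF T] show ?thesis by auto
  qed simp
  then show "bihom (d - t) C" and "C \<noteq> 0 \<Longrightarrow> t \<le> d" by auto
qed

section \<open>The vector space of forms of degree \<open>m\<close>\<close>

definition form_scale :: "'a::field \<Rightarrow> 'a poly poly \<Rightarrow> 'a poly poly" where
  "form_scale c p = smult [:c:] p"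

lemma vector_space_form_scale: "vector_space (form_scale :: 'a::field \<Rightarrow> _)"
  by unfold_locales
    (auto simp: form_scale_def smult_add_right smult_add_left[symmetric] mult_to_poly
      one_pCons[symmetric] mult.commute)

interpretation forms: vector_space "form_scale :: 'a::field \<Rightarrow> _"
  by (rule vector_space_form_scale)

interpretation form_pairs: vector_space_prod "form_scale :: 'a::field \<Rightarrow> _" form_scale ..

interpretation forms_to_pairs: vector_space_pair "form_scale :: 'a::field \<Rightarrow> _" form_pairs.scale ..

interpretation form_triples: vector_space_prod "form_scale :: 'a::field \<Rightarrow> _" form_pairs.scale ..

interpretation pairs_to_forms: vector_space_pair form_pairs.scale "form_scale :: 'a::field \<Rightarrow> _" ..

interpretation triples_to_forms: vector_space_pair form_triples.scale "form_scale :: 'a::field \<Rightarrow> _" ..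

lemma triple_scale_eq: "triple_scale = (form_triples.scale :: 'a::field \<Rightarrow> _)"
  by (intro ext) (auto simp: triple_scale_def form_triples.scale_def form_pairs.scale_def form_scale_def)

definition hom_forms :: "nat \<Rightarrow> 'a::field poly poly set" where
  "hom_forms m = {P. bihom m P}"

lemma hom_forms_subspace: "forms.subspace (hom_forms m)"
  unfolding forms.subspace_def hom_forms_def
  by (auto simp: bihom_add form_scale_def bihom_smult_const)

definition monomial_forms :: "nat \<Rightarrow> 'a::field poly poly set" where
  "monomial_forms m = (\<lambda>i. monom (monom 1 i) (m - i)) ` {..m}"

lemma inj_on_monomial_forms: "inj_on (\<lambda>i. monom (monom (1::'a::field) i) (m - i)) {..m}"
  by (intro inj_onI) (metis monom_eq_iff' one_neq_zero monom_eq_0_iff)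

lemma coeff_coeff_sum: "coeff (coeff (sum f S) j) k = (\<Sum>x\<in>S. coeff (coeff (f x) j) k)"
  by (simp add: coeff_sum)

lemma coeff_scaled_monomial:
  "coeff (coeff (form_scale c (monom (monom 1 i) n)) j) k = (if j = n \<and> k = i then c else 0)"
  by (simp add: form_scale_def)

lemma monomial_forms_independent: "forms.independent (monomial_forms m :: 'a::field poly poly set)"
proof (rule forms.independent_if_scalars_zero)
  show "finite (monomial_forms m)" by (simp add: monomial_forms_def)
next
  fix f :: "'a poly poly \<Rightarrow> 'a" and x :: "'a poly poly"
  assume sum0: "(\<Sum>x\<in>monomial_forms m. form_scale (f x) x) = 0" and x: "x \<in> monomial_forms m"
  define M where "M i = monom (monom (1::'a) i) (m - i)" for i
  obtain i0 where i0: "i0 \<le> m" "x = M i0" using x unfolding monomial_forms_def M_def by auto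
  have "(\<Sum>x\<in>monomial_forms m. form_scale (f x) x) = (\<Sum>i\<le>m. form_scale (f (M i)) (M i))"
    unfolding monomial_forms_def M_def by (subst sum.reindex[OF inj_on_monomial_forms]) simp
  then have "0 = coeff (coeff (\<Sum>i\<le>m. form_scale (f (M i)) (M i)) (m - i0)) i0" using sum0 by simp
  also have "\<dots> = (\<Sum>i\<le>m. if i = i0 then f (M i) else 0)"
    unfolding coeff_coeff_sum M_def coeff_scaled_monomial by (intro sum.cong) auto
  also have "\<dots> = f x" using i0 by simp
  finally show "f x = 0" by simp
qed

lemma hom_forms_span: "hom_forms m \<subseteq> forms.span (monomial_forms m)"
proof
  fix F :: "'a poly poly" assume F: "F \<in> hom_forms m"
  define M where "M i = monom (monom (1::'a) i) (m - i)" for i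
  have "F = (\<Sum>i\<le>m. form_scale (coeff (coeff F (m - i)) i) (M i))"
  proof (intro poly_eqI)
    fix j k
    have supp: "coeff (coeff F j) k \<noteq> 0 \<Longrightarrow> k \<le> m \<and> j = m - k"
      using F unfolding hom_forms_def bihom_def by force
    have "coeff (coeff (\<Sum>i\<le>m. form_scale (coeff (coeff F (m - i)) i) (M i)) j) k
        = (\<Sum>i\<le>m. if i = k then (if j = m - k then coeff (coeff F j) k else 0) else 0)"
      unfolding coeff_coeff_sum M_def coeff_scaled_monomial by (intro sum.cong) auto
    also have "\<dots> = coeff (coeff F j) k"
      using supp by (cases "coeff (coeff F j) k = 0") auto
    finally show "coeff (coeff F j) k
        = coeff (coeff (\<Sum>i\<le>m. form_scale (coeff (coeff F (m - i)) i) (M i)) j) k" by simp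
  qed
  also have "\<dots> \<in> forms.span (monomial_forms m)"
    unfolding monomial_forms_def M_def
    by (intro forms.span_sum forms.span_scale forms.span_base) auto
  finally show "F \<in> forms.span (monomial_forms m)" .
qed

lemma hom_forms_finitely_spanned: "finitely_spanned form_scale (hom_forms m)"
  unfolding finitely_spanned_def using hom_forms_span by (auto simp: monomial_forms_def)

lemma dim_hom_forms: "forms.dim (hom_forms m :: 'a::field poly poly set) = m + 1"
proof -
  have "card (monomial_forms m :: 'a poly poly set) = forms.dim (hom_forms m :: 'a poly poly set)"
  proof (rule forms.basis_card_eq_dim[OF _ hom_forms_span monomial_forms_independent])
    show "monomial_forms m \<subseteq> hom_forms m"
      unfolding monomial_forms_def hom_forms_def bihom_def by (auto simp: coeff_monom split: if_splits)
  qed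
  moreover have "card (monomial_forms m :: 'a poly poly set) = m + 1"
    using card_image[OF inj_on_monomial_forms[where 'a='a, of m]] unfolding monomial_forms_def
    by simp
  ultimately show ?thesis by simp
qed

lemma dim_hom_forms_pairs:
  "form_pairs.p.dim (hom_forms a \<times> hom_forms b :: ('a::field poly poly \<times> _) set) = (a + 1) + (b + 1)"
  using form_pairs.dim_Times_finite[OF hom_forms_subspace hom_forms_subspace
      hom_forms_finitely_spanned hom_forms_finitely_spanned]
  by (simp add: dim_hom_forms)

lemma dim_hom_forms_triples:
  "form_triples.p.dim (hom_forms a \<times> hom_forms b \<times> hom_forms c :: ('a::field poly poly \<times> _) set)
    = (a + 1) + (b + 1) + (c + 1)"
  using form_triples.dim_Times_finite[OF hom_forms_subspace
      form_pairs.subspace_Times[OF hom_forms_subspace hom_forms_subspace]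
      hom_forms_finitely_spanned
      form_pairs.finitely_spanned_Times[OF hom_forms_finitely_spanned hom_forms_finitely_spanned]]
  by (simp add: dim_hom_forms dim_hom_forms_pairs ac_simps)

section \<open>Forms generated by coprime forms\<close>

lemma coprime_syzygy:
  fixes T1 T2 A B :: "'a::field_gcd poly poly"
  assumes T2: "T2 \<noteq> 0" "bihom t2 T2" and cop: "coprime T1 T2"
    and A: "bihom n A" and syz: "T1 * A + T2 * B = 0"
  obtains C where "A = T2 * C" "B = - (T1 * C)" "bihom (n - t2) C" "C \<noteq> 0 \<Longrightarrow> t2 \<le> n"
proof -
  have "T2 dvd T1 * A" using syz by (metis add_eq_0_iff dvd_minus_iff dvd_triv_left)
  then have "T2 dvd A" using cop by (simp add: coprime_commute coprime_dvd_mult_right_iff)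
  then obtain C where C: "A = T2 * C" by (elim dvdE)
  have "T2 * (T1 * C + B) = 0" using syz C by (simp add: algebra_simps)
  then have "B = - (T1 * C)" using T2(1) by (simp add: add_eq_0_iff)
  with C show thesis using that bihom_cofactor[OF T2] A by metis
qed

lemma linear_pair_combination:
  "Vector_Spaces.linear form_pairs.scale form_scale
     (\<lambda>x. T1 * fst x + T2 * snd x :: 'a::field poly poly)"
  by (auto simp: Vector_Spaces.linear_iff form_pairs.scale_def form_scale_def algebra_simps
      smult_add_right vector_space_form_scale form_pairs.p.vector_space_axioms)

lemma coprime_syzygies_Koszul:
  fixes T1 T2 :: "'a::field_gcd poly poly"
  assumes T2: "T2 \<noteq> 0" and hom: "bihom t1 T1" "bihom t2 T2"
    and cop: "coprime T1 T2" and le: "t1 + t2 \<le> m"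
  shows "{x \<in> hom_forms (m - t1) \<times> hom_forms (m - t2). T1 * fst x + T2 * snd x = 0}
    = (\<lambda>C. (T2 * C, - (T1 * C))) ` hom_forms (m - t1 - t2)" (is "?K = ?g ` _")
proof
  show "?K \<subseteq> ?g ` hom_forms (m - t1 - t2)"
  proof
    fix x assume x: "x \<in> ?K"
    obtain A B where AB: "x = (A, B)" by (cases x)
    with x have "bihom (m - t1) A" "T1 * A + T2 * B = 0" unfolding hom_forms_def by auto
    then obtain C where "A = T2 * C" "B = - (T1 * C)" "bihom (m - t1 - t2) C"
      using coprime_syzygy[OF T2 hom(2) cop] by metis
    then show "x \<in> ?g ` hom_forms (m - t1 - t2)" using AB unfolding hom_forms_def by auto
  qed
  show "?g ` hom_forms (m - t1 - t2) \<subseteq> ?K"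
  proof
    fix y assume "y \<in> ?g ` hom_forms (m - t1 - t2)"
    then obtain C where y: "y = ?g C" and C: "bihom (m - t1 - t2) C" unfolding hom_forms_def by auto
    have "bihom (t2 + (m - t1 - t2)) (T2 * C)" "bihom (t1 + (m - t1 - t2)) (- (T1 * C))"
      using bihom_mult[OF hom(2) C] bihom_mult[OF hom(1) C] bihom_uminus by auto
    moreover have "t2 + (m - t1 - t2) = m - t1" "t1 + (m - t1 - t2) = m - t2" using le by auto
    moreover have "T1 * (T2 * C) + T2 * - (T1 * C) = 0" by (simp add: mult.left_commute)
    ultimately show "y \<in> ?K" unfolding y hom_forms_def by simp
  qed
qed

lemma coprime_syzygies_trivial:
  fixes T1 T2 :: "'a::field_gcd poly poly"
  assumes T2: "T2 \<noteq> 0" "bihom t2 T2" and cop: "coprime T1 T2"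
    and le: "t1 \<le> m" "\<not> t1 + t2 \<le> m"
  shows "{x \<in> hom_forms (m - t1) \<times> hom_forms (m - t2). T1 * fst x + T2 * snd x = 0} = {0}"
    (is "?K = _")
proof -
  have "?K \<subseteq> {0}"
  proof
    fix x assume x: "x \<in> ?K"
    obtain A B where AB: "x = (A, B)" by (cases x)
    with x have "bihom (m - t1) A" "T1 * A + T2 * B = 0" unfolding hom_forms_def by auto
    then obtain C where C: "A = T2 * C" "B = - (T1 * C)" "C \<noteq> 0 \<Longrightarrow> t2 \<le> m - t1"
      using coprime_syzygy[OF T2 cop] by metis
    then have "C = 0" using le by (cases "C = 0") auto
    then show "x \<in> {0}" using AB C by (simp add: zero_prod_def)
  qed
  then show ?thesis by (auto simp: hom_forms_def zero_prod_def)
qed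

lemma dim_coprime_syzygies:
  fixes T1 T2 :: "'a::field_gcd poly poly"
  assumes nz: "T1 \<noteq> 0" "T2 \<noteq> 0" and hom: "bihom t1 T1" "bihom t2 T2"
    and cop: "coprime T1 T2" and le: "t1 \<le> m" "t2 \<le> m" "t1 + t2 \<le> m + 1"
  shows "form_pairs.p.dim {x \<in> hom_forms (m - t1) \<times> hom_forms (m - t2). T1 * fst x + T2 * snd x = 0}
    = m + 1 - t1 - t2"
proof (cases "t1 + t2 \<le> m")
  case True
  have lin: "Vector_Spaces.linear form_scale form_pairs.scale (\<lambda>C. (T2 * C, - (T1 * C)))"
    by (auto simp: Vector_Spaces.linear_iff form_pairs.scale_def form_scale_def algebra_simps
        vector_space_form_scale form_pairs.p.vector_space_axioms)
  have inj: "inj_on (\<lambda>C. (T2 * C, - (T1 * C))) (hom_forms (m - t1 - t2))"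
    using nz by (auto intro!: inj_onI)
  show ?thesis
    unfolding coprime_syzygies_Koszul[OF nz(2) hom cop True]
      forms_to_pairs.dim_image_inj[OF lin hom_forms_subspace hom_forms_finitely_spanned inj]
    using True by (simp add: dim_hom_forms)
next
  case False
  then show ?thesis using coprime_syzygies_trivial[OF nz(2) hom(2) cop le(1) False] le by simp
qed

text \<open>Two coprime forms of degrees \<open>t1, t2\<close> generate all forms of degree \<open>m\<close> as soon as
  \<open>t1 + t2 \<le> m + 1\<close>: by rank--nullity and the kernel dimension above, the image of
  \<open>k[u,v]\<^sub>m\<^sub>-\<^sub>t\<^sub>1 \<times> k[u,v]\<^sub>m\<^sub>-\<^sub>t\<^sub>2\<close> has dimension \<open>m + 1\<close>.\<close>
lemma coprime_forms_generate:
  fixes T1 T2 F :: "'a::field_gcd poly poly"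
  assumes nz: "T1 \<noteq> 0" "T2 \<noteq> 0" and hom: "bihom t1 T1" "bihom t2 T2"
    and cop: "coprime T1 T2" and le: "t1 \<le> m" "t2 \<le> m" "t1 + t2 \<le> m + 1"
    and F: "bihom m F"
  obtains A B where "bihom (m - t1) A" "bihom (m - t2) B" "F = T1 * A + T2 * B"
proof -
  define W where "W = (hom_forms (m - t1) :: 'a poly poly set) \<times> (hom_forms (m - t2) :: 'a poly poly set)"
  define f where "f x = T1 * fst x + T2 * snd x" for x :: "'a poly poly \<times> 'a poly poly"
  have lin: "Vector_Spaces.linear form_pairs.scale form_scale f"
    unfolding f_def by (rule linear_pair_combination)
  have W: "form_pairs.p.subspace W" "finitely_spanned form_pairs.scale W"
    unfolding W_def
    by (intro form_pairs.subspace_Times hom_forms_subspace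
        form_pairs.finitely_spanned_Times hom_forms_finitely_spanned)+
  have "form_pairs.p.dim W = form_pairs.p.dim {x\<in>W. f x = 0} + forms.dim (f ` W)"
    by (rule pairs_to_forms.rank_nullity[OF lin W])
  then have dim_image: "forms.dim (f ` W) = forms.dim (hom_forms m :: 'a poly poly set)"
    using dim_coprime_syzygies[OF nz hom cop le] le
    unfolding W_def f_def dim_hom_forms_pairs dim_hom_forms by simp
  have "f ` W \<subseteq> hom_forms m"
  proof
    fix y assume "y \<in> f ` W"
    then obtain A B where y: "y = T1 * A + T2 * B" "bihom (m - t1) A" "bihom (m - t2) B"
      unfolding W_def hom_forms_def f_def by auto
    then have "bihom (t1 + (m - t1)) (T1 * A)" "bihom (t2 + (m - t2)) (T2 * B)"
      using bihom_mult hom by blast+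
    then show "y \<in> hom_forms m" using y le unfolding hom_forms_def by (auto intro: bihom_add)
  qed
  then have "f ` W = hom_forms m"
    using forms.subspace_eq_of_dim_eq[OF pairs_to_forms.linear_subspace_image[OF lin W(1)] _
        hom_forms_finitely_spanned dim_image] by blast
  then have "F \<in> f ` W" using F unfolding hom_forms_def by simp
  then obtain x where "x \<in> W" "F = f x" by blast
  then show thesis using that unfolding W_def hom_forms_def f_def by auto
qed

text \<open>Three forms without common factor and of pairwise degree sums \<open>\<le> N\<close> generate all
  forms of degree \<open>N\<close>: write \<open>F = H A + S3 B\<close> with \<open>H = gcd S1 S2\<close> coprime to \<open>S3\<close>, then
  \<open>A = (S1/H) C1 + (S2/H) C2\<close>.\<close>
lemma gcd_one_forms_generate:
  fixes S1 S2 S3 F :: "'a::field_gcd poly poly"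
  assumes nz: "S1 \<noteq> 0" "S2 \<noteq> 0" "S3 \<noteq> 0"
    and hom: "bihom a1 S1" "bihom a2 S2" "bihom a3 S3"
    and gcd: "gcd S1 (gcd S2 S3) = 1"
    and le: "a1 + a2 \<le> N" "a1 + a3 \<le> N" "a2 + a3 \<le> N" "a1 \<le> N" "a2 \<le> N" "a3 \<le> N"
    and F: "bihom N F"
  obtains P1 P2 P3 where "bihom (N - a1) P1" "bihom (N - a2) P2" "bihom (N - a3) P3"
    "F = S1 * P1 + S2 * P2 + S3 * P3"
proof -
  define H where "H = gcd S1 S2"
  define T1 where "T1 = S1 div H"
  define T2 where "T2 = S2 div H"
  have S1: "S1 = H * T1" and S2: "S2 = H * T2" unfolding T1_def T2_def H_def by simp_all
  have T: "T1 \<noteq> 0" "T2 \<noteq> 0" using S1 S2 nz by auto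
  define h where "h = bi_total_degree H"
  have fac1: "bihom h H" "bihom (bi_total_degree T1) T1" "h + bi_total_degree T1 = a1"
    using bihom_factor[of H T1 a1] S1 nz hom h_def by auto
  have fac2: "bihom (bi_total_degree T2) T2" "h + bi_total_degree T2 = a2"
    using bihom_factor[of H T2 a2] S2 nz hom h_def by auto
  have "coprime T1 T2" unfolding T1_def T2_def H_def using nz by (simp add: div_gcd_coprime)
  moreover have "coprime H S3"
    using gcd unfolding H_def by (simp add: gcd.assoc coprime_iff_gcd_eq_1)
  moreover have "H \<noteq> 0" using nz H_def by simp
  ultimately obtain A B where AB: "bihom (N - h) A" "bihom (N - a3) B" "F = H * A + S3 * B"
    using coprime_forms_generate[of H S3 h a3 N F] fac1 nz hom le F by auto
  have "bi_total_degree T1 \<le> N - h" "bi_total_degree T2 \<le> N - h"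
    "bi_total_degree T1 + bi_total_degree T2 \<le> N - h + 1" using fac1 fac2 le by auto
  then obtain C1 C2 where C: "bihom (N - h - bi_total_degree T1) C1"
      "bihom (N - h - bi_total_degree T2) C2" "A = T1 * C1 + T2 * C2"
    using coprime_forms_generate[OF T fac1(2) fac2(1) \<open>coprime T1 T2\<close> _ _ _ AB(1)] by blast
  have "F = S1 * C1 + S2 * C2 + S3 * B" using AB(3) C(3) S1 S2 by (simp add: algebra_simps)
  moreover have "N - h - bi_total_degree T1 = N - a1" "N - h - bi_total_degree T2 = N - a2"
    using fac1 fac2 by auto
  ultimately show thesis using that C AB by metis
qed

section \<open>The dimension of the syzygy space\<close>

definition syzygies ::
  "nat \<Rightarrow> nat \<Rightarrow> nat \<Rightarrow> 'a::comm_ring_1 poly poly \<Rightarrow> 'a poly poly \<Rightarrow> 'a poly poly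
     \<Rightarrow> ('a poly poly \<times> 'a poly poly \<times> 'a poly poly) set" where
  "syzygies n1 n2 n3 S1 S2 S3 = {(P1, P2, P3). bihom n1 P1 \<and> bihom n2 P2 \<and> bihom n3 P3
      \<and> S1 * P1 + S2 * P2 + S3 * P3 = 0}"

lemma syzygies_cancel_common_factor:
  fixes G :: "'a::idom poly poly"
  assumes "G \<noteq> 0"
  shows "syzygies n1 n2 n3 (G * S1) (G * S2) (G * S3) = syzygies n1 n2 n3 S1 S2 S3"
proof -
  have "G * S1 * P1 + G * S2 * P2 + G * S3 * P3 = G * (S1 * P1 + S2 * P2 + S3 * P3)" for P1 P2 P3
    by (simp add: algebra_simps)
  then show ?thesis using assms unfolding syzygies_def by auto
qed

lemma linear_triple_combination:
  "Vector_Spaces.linear form_triples.scale form_scale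
     (\<lambda>x. S1 * fst x + S2 * fst (snd x) + S3 * snd (snd x) :: 'a::field poly poly)"
  by (auto simp: Vector_Spaces.linear_iff form_triples.scale_def form_pairs.scale_def form_scale_def
      algebra_simps smult_add_right vector_space_form_scale form_triples.p.vector_space_axioms)

lemma image_triple_combination:
  fixes S1 S2 S3 :: "'a::field_gcd poly poly"
  assumes nz: "S1 \<noteq> 0" "S2 \<noteq> 0" "S3 \<noteq> 0"
    and hom: "bihom a1 S1" "bihom a2 S2" "bihom a3 S3"
    and gcd: "gcd S1 (gcd S2 S3) = 1"
    and le: "a1 + a2 \<le> N" "a1 + a3 \<le> N" "a2 + a3 \<le> N" "a1 \<le> N" "a2 \<le> N" "a3 \<le> N"
  shows "(\<lambda>x. S1 * fst x + S2 * fst (snd x) + S3 * snd (snd x))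
      ` (hom_forms (N - a1) \<times> hom_forms (N - a2) \<times> hom_forms (N - a3)) = hom_forms N"
    (is "?f ` ?W = _")
proof
  show "?f ` ?W \<subseteq> hom_forms N"
  proof
    fix y assume "y \<in> ?f ` ?W"
    then obtain P1 P2 P3 where P: "y = S1 * P1 + S2 * P2 + S3 * P3"
      "bihom (N - a1) P1" "bihom (N - a2) P2" "bihom (N - a3) P3"
      unfolding hom_forms_def by auto
    then have "bihom (a1 + (N - a1)) (S1 * P1)" "bihom (a2 + (N - a2)) (S2 * P2)"
      "bihom (a3 + (N - a3)) (S3 * P3)" using bihom_mult hom by blast+
    then show "y \<in> hom_forms N" using P le unfolding hom_forms_def by (auto intro!: bihom_add)
  qed
  show "hom_forms N \<subseteq> ?f ` ?W"
  proof
    fix F :: "'a poly poly" assume "F \<in> hom_forms N"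
    then obtain P1 P2 P3 where "bihom (N - a1) P1" "bihom (N - a2) P2" "bihom (N - a3) P3"
      "F = S1 * P1 + S2 * P2 + S3 * P3"
      using gcd_one_forms_generate[OF nz hom gcd le] unfolding hom_forms_def by blast
    then have "(P1, P2, P3) \<in> ?W" "F = ?f (P1, P2, P3)" unfolding hom_forms_def by auto
    then show "F \<in> ?f ` ?W" by blast
  qed
qed

lemma dim_syzygies_gcd_one:
  fixes S1 S2 S3 :: "'a::field_gcd poly poly"
  assumes nz: "S1 \<noteq> 0" "S2 \<noteq> 0" "S3 \<noteq> 0"
    and hom: "bihom a1 S1" "bihom a2 S2" "bihom a3 S3"
    and gcd: "gcd S1 (gcd S2 S3) = 1"
    and le: "a1 + a2 \<le> N" "a1 + a3 \<le> N" "a2 + a3 \<le> N" "a1 \<le> N" "a2 \<le> N" "a3 \<le> N"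
  shows "form_triples.p.dim (syzygies (N - a1) (N - a2) (N - a3) S1 S2 S3) + (N + 1)
    = (N - a1 + 1) + (N - a2 + 1) + (N - a3 + 1)"
proof -
  define W where "W = (hom_forms (N - a1) :: 'a poly poly set) \<times> (hom_forms (N - a2) :: 'a poly poly set)
    \<times> (hom_forms (N - a3) :: 'a poly poly set)"
  define f where "f x = S1 * fst x + S2 * fst (snd x) + S3 * snd (snd x)"
    for x :: "'a poly poly \<times> 'a poly poly \<times> 'a poly poly"
  have W: "form_triples.p.subspace W" "finitely_spanned form_triples.scale W"
    unfolding W_def
    by (intro form_triples.subspace_Times form_pairs.subspace_Times hom_forms_subspace
        form_triples.finitely_spanned_Times form_pairs.finitely_spanned_Times
        hom_forms_finitely_spanned)+
  have "syzygies (N - a1) (N - a2) (N - a3) S1 S2 S3 = {x\<in>W. f x = 0}"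
    unfolding syzygies_def W_def f_def hom_forms_def by auto
  moreover have "f ` W = hom_forms N"
    unfolding W_def f_def by (rule image_triple_combination[OF nz hom gcd le])
  moreover have "Vector_Spaces.linear form_triples.scale form_scale f"
    unfolding f_def by (rule linear_triple_combination)
  ultimately show ?thesis
    using triples_to_forms.rank_nullity[OF _ W]
    unfolding W_def dim_hom_forms_triples by (simp add: dim_hom_forms)
qed

lemma gcd_cofactors:
  fixes R1 R2 R3 :: "'b::semiring_gcd_mult_normalize"
  assumes "R1 \<noteq> 0"
  obtains S1 S2 S3 where "R1 = gcd R1 (gcd R2 R3) * S1" "R2 = gcd R1 (gcd R2 R3) * S2"
    "R3 = gcd R1 (gcd R2 R3) * S3" "gcd S1 (gcd S2 S3) = 1"
proof -
  define G where "G = gcd R1 (gcd R2 R3)"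
  have "G dvd R1" "G dvd R2" "G dvd R3" unfolding G_def by (meson dvd_trans gcd_dvd1 gcd_dvd2)+
  then obtain S1 S2 S3 where S: "R1 = G * S1" "R2 = G * S2" "R3 = G * S3" by (metis dvdE)
  have "G * 1 = G * gcd S1 (gcd S2 S3)"
  proof -
    have normalized: "normalize G = G" unfolding G_def by simp
    have "G = gcd (G * S1) (gcd (G * S2) (G * S3))" using G_def S by simp
    also have "\<dots> = G * gcd S1 (gcd S2 S3)"
      by (simp only: gcd_mult_distrib'[symmetric] normalized)
    finally show ?thesis by simp
  qed
  moreover have "G \<noteq> 0" using assms G_def by simp
  ultimately have "gcd S1 (gcd S2 S3) = 1" by (metis mult_left_cancel)
  then show thesis using that S unfolding G_def by simp
qed

theorem lemma3p12:
  fixes R1 R2 R3 :: "'a::field_gcd poly poly"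
    and D e1 e2 e3 :: nat
  assumes "e1 \<le> D" "e2 \<le> D" "e3 \<le> D"
    and "e1 + e2 \<le> D" "e1 + e3 \<le> D" "e2 + e3 \<le> D"
    and "R1 \<noteq> 0" "R2 \<noteq> 0" "R3 \<noteq> 0"
    and "bihom e1 R1" "bihom e2 R2" "bihom e3 R3"
  shows "int (vector_space.dim triple_scale
            {(P1, P2, P3). bihom (D - e1) P1 \<and> bihom (D - e2) P2 \<and> bihom (D - e3) P3
                \<and> R1 * P1 + R2 * P2 + R3 * P3 = 0})
         = 2 + 2 * int D - int (e1 + e2 + e3) + int (bi_total_degree (gcd R1 (gcd R2 R3)))"
proof -
  note le = assms(1-6) and nz = assms(7-9) and hom = assms(10-12)
  define G where "G = gcd R1 (gcd R2 R3)"
  obtain S1 S2 S3 where R: "R1 = G * S1" "R2 = G * S2" "R3 = G * S3"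
    and gcd: "gcd S1 (gcd S2 S3) = 1"
    using gcd_cofactors[OF nz(1)] unfolding G_def by metis
  define g where "g = bi_total_degree G"
  have fac: "bihom (bi_total_degree S1) S1" "g + bi_total_degree S1 = e1"
    "bihom (bi_total_degree S2) S2" "g + bi_total_degree S2 = e2"
    "bihom (bi_total_degree S3) S3" "g + bi_total_degree S3 = e3"
    using bihom_factor[of G S1 e1] bihom_factor[of G S2 e2] bihom_factor[of G S3 e3]
      R nz hom unfolding g_def by auto
  have S: "S1 \<noteq> 0" "S2 \<noteq> 0" "S3 \<noteq> 0" "G \<noteq> 0" using R nz by auto
  have "form_triples.p.dim (syzygies (D - e1) (D - e2) (D - e3) R1 R2 R3) + (D - g + 1)
      = (D - e1 + 1) + (D - e2 + 1) + (D - e3 + 1)"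
    using dim_syzygies_gcd_one[OF S(1-3) fac(1,3,5) gcd, of "D - g"] fac le
    unfolding R syzygies_cancel_common_factor[OF S(4)] by auto
  then show ?thesis
    unfolding triple_scale_eq syzygies_def[symmetric] G_def[symmetric] g_def[symmetric]
    using fac le by linarith
qed

end
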